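(* Let $i\in\mathcal N$, let $\mathbf l_i$ be an $m$-cell configuration of $i$, let $\ell\in\mathcal N_i$ and let $\mathbf l_\ell$ be any $m$-cell configuration of $\ell$ consistent with $\mathbf l_i$. Let $t^*$ be the unique positive solution of $$e^{L_2t^*}-\Big(L_2+\frac{L_2^2}{L_1\sqrt{N_{\max}}}\Big)t^*-1=0,\qquad N_{\max}:=\max\{N_i:i\in\mathcal N\}.$$ Then for every $\kappa\in\bar{\mathcal N}_\ell^{m-1}$ (note $\bar{\mathcal N}_\ell^{m-1}\subset\bar{\mathcal N}_i^m$), $$|\chi_\kappa^{[i]}(t)-\chi_\kappa^{[\ell]}(t)|\le Mt\quad\text{for all }t\in[0,t^*],$$ where $\chi_\kappa^{[i]}$ and $\chi_\kappa^{[\ell]}$ are computed from $\mathbf l_i$ and $\mathbf l_\ell$ respectively.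
   Context: Graph notions: $\mathcal N=\{1,\dots,N\}$ is a finite set of agents, agent $i$ has neighbor set $\mathcal N_i\subset\mathcal N\setminus\{i\}$ of cardinality $N_i$; $\mathcal G=(\mathcal N,\mathcal E)$ with $(\ell,i)\in\mathcal E$ iff $\ell\in\mathcal N_i$; a path of length $m$ is a sequence $i_0\cdots i_m$ with $(i_{k-1},i_k)\in\mathcal E$. For $m\ge1$, $\mathcal N_i^m$ is the set of agents $j\ne i$ having a path of length $m$ to $i$ and no shorter path to $i$; $\mathcal N_i^0=\{i\}$; $\bar{\mathcal N}_i^m=\bigcup_{k=0}^m\mathcal N_i^k$, of cardinality $\bar N_i^m$. Dynamics: each agent has state $x_i\in\mathbb R^n$ and drift $f_i(x_i,\mathbf x_j)$, $\mathbf x_j=(x_{j_1},\dots,x_{j_{N_i}})$ listing the neighbors' states in a fixed order. There are constants $M,L_1,L_2>0$ with $|f_i(x_i,\mathbf x_j)|\le M$, $|f_i(x_i,\mathbf x_j)-f_i(x_i,\mathbf y_j)|\le L_1|\mathbf x_j-\mathbf y_j|$ and $|f_i(x_i,\mathbf x_j)-f_i(y_i,\mathbf x_j)|\le L_2|x_i-y_i|$ for all $x_i,y_i\in\mathbb R^n$, $\mathbf x_j,\mathbf y_j\in\mathbb R^{N_in}$, $i\in\mathcal N$. Cells and reference trajectories: a cell decomposition $\mathcal S=\{S_l\}_{l\in\mathcal I}$ of $\mathbb R^n$ ($\mathcal I$ finite or countable) is a family of uniformly bounded connected sets with pairwise disjoint interiors whose union is $\mathbb R^n$; a reference point $x_{l,G}\in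 S_l$ is fixed for each $l$. Fix the degree of decentralization $m\ge1$. An $m$-cell configuration of agent $i$ is a tuple $\mathbf l_i=(l_\kappa)_{\kappa\in\bar{\mathcal N}_i^m}\in\mathcal I^{\bar N_i^m}$. Given $\mathbf l_i$, define $\chi_\kappa^{[i]}:[0,\infty)\to\mathbb R^n$ for $\kappa\in\bar{\mathcal N}_i^m$ as follows. Case (i), $\mathcal N_i^{m+1}=\emptyset$: $\dot\chi_\kappa^{[i]}(t)=f_\kappa(\chi_\kappa^{[i]}(t),\boldsymbol\chi_{j(\kappa)}^{[i]}(t))$, $\chi_\kappa^{[i]}(0)=x_{l_\kappa,G}$, for all $\kappa\in\bar{\mathcal N}_i^m$, where $\boldsymbol\chi_{j(\kappa)}^{[i]}$ lists $\chi_\nu^{[i]}$, $\nu\in\mathcal N_\kappa$ (these $\nu$ lie in $\bar{\mathcal N}_i^m$). Case (ii), $\mathcal N_i^{m+1}\ne\emptyset$: the same ODE and initial conditions for $\kappa\in\bar{\mathcal N}_i^{m-1}$, while $\chi_\kappa^{[i]}(t):=x_{l_\kappa,G}$ for all $t\ge0$ and $\kappa\in\mathcal N_i^m$. For $\ell\in\mathcal N_i$, an $m$-cell configuration $\mathbf l_\ell=(\bar l_\kappa)_{\kappa\in\bar{\mathcal N}_\ell^m}$ of $\ell$ is consistent with $\mathbf l_i=(l_\kappa)_{\kappa\in\bar{\mathcal N}_i^m}$ if $l_\kappa=\bar l_\kappa$ for all $\kappa\in\bar{\mathcal N}_i^m\cap\bar{\mathcal N}_\ell^m$. *)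

theory Defs
  imports "HOL-Analysis.Analysis"
begin

text \<open>Agents are the natural numbers 1..N; Nb i is the neighbour set of agent i.
  A path of length m from j to i: p 0 = j, p m = i, and (p k, p (k+1)) is an edge,
  i.e. p k is a neighbour of p (k+1).\<close>

definition has_path :: "(nat \<Rightarrow> nat set) \<Rightarrow> nat \<Rightarrow> nat \<Rightarrow> nat \<Rightarrow> bool" where
  "has_path Nb j i m \<longleftrightarrow>
     (\<exists>p::nat \<Rightarrow> nat. p 0 = j \<and> p m = i \<and> (\<forall>k<m. p k \<in> Nb (p (Suc k))))"

definition layer :: "nat \<Rightarrow> (nat \<Rightarrow> nat set) \<Rightarrow> nat \<Rightarrow> nat \<Rightarrow> nat set" where
  "layer N Nb i m =
     (if m = 0 then {i}
      else {j \<in> {1..N}. j \<noteq> i \<and> has_path Nb j i m \<and> (\<forall>k<m. \<not> has_path Nb j i k)})"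

definition ball_layer :: "nat \<Rightarrow> (nat \<Rightarrow> nat set) \<Rightarrow> nat \<Rightarrow> nat \<Rightarrow> nat set" where
  "ball_layer N Nb i m = (\<Union>k\<le>m. layer N Nb i k)"

text \<open>Euclidean norm of the difference of two stacked neighbour-state vectors
  (x_{j_1},...,x_{j_{N_i}}) and (y_{j_1},...,y_{j_{N_i}}).\<close>
definition nbr_dist :: "(nat \<Rightarrow> nat set) \<Rightarrow> nat \<Rightarrow> (nat \<Rightarrow> 'v::euclidean_space) \<Rightarrow> (nat \<Rightarrow> 'v) \<Rightarrow> real" where
  "nbr_dist Nb i x y = sqrt (\<Sum>j\<in>Nb i. (norm (x j - y j))\<^sup>2)"

definition cell_decomposition :: "'c set \<Rightarrow> ('c \<Rightarrow> 'v::euclidean_space set) \<Rightarrow> bool" where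
  "cell_decomposition I S \<longleftrightarrow>
     countable I \<and>
     (\<exists>B. \<forall>l\<in>I. \<forall>x\<in>S l. \<forall>y\<in>S l. dist x y \<le> B) \<and>
     (\<forall>l\<in>I. connected (S l)) \<and>
     (\<forall>l\<in>I. \<forall>l'\<in>I. l \<noteq> l' \<longrightarrow> interior (S l) \<inter> interior (S l') = {}) \<and>
     (\<Union>l\<in>I. S l) = UNIV"

text \<open>chi is a family of reference trajectories chi_kappa^[i] (kappa in Nbar_i^m) of agent i
  computed from the m-cell configuration lc (cases (i) and (ii) of the paper).\<close>
definition ref_traj ::
  "nat \<Rightarrow> (nat \<Rightarrow> nat set) \<Rightarrow> (nat \<Rightarrow> 'v::euclidean_space \<Rightarrow> (nat \<Rightarrow> 'v) \<Rightarrow> 'v) \<Rightarrow>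
   ('c \<Rightarrow> 'v) \<Rightarrow> nat \<Rightarrow> nat \<Rightarrow> (nat \<Rightarrow> 'c) \<Rightarrow> (nat \<Rightarrow> real \<Rightarrow> 'v) \<Rightarrow> bool" where
  "ref_traj N Nb f xG m i lc chi \<longleftrightarrow>
     (let D = (if layer N Nb i (Suc m) = {} then ball_layer N Nb i m
               else ball_layer N Nb i (m - 1))
      in (\<forall>\<kappa>\<in>D. chi \<kappa> 0 = xG (lc \<kappa>) \<and>
            (\<forall>t\<ge>0. ((chi \<kappa>) has_vector_derivative
                       f \<kappa> (chi \<kappa> t) (\<lambda>\<nu>. chi \<nu> t)) (at t within {0..}))) \<and>
         (layer N Nb i (Suc m) \<noteq> {} \<longrightarrow>
            (\<forall>\<kappa>\<in>layer N Nb i m. \<forall>t\<ge>0. chi \<kappa> t = xG (lc \<kappa>))))"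

end

theory Submission
  imports Defs
begin

text \<open>
  On the set E of agents whose reference trajectories solve the ODE in both configurations, the
  differences d = chi^[i] - chi^[l] start at 0 (consistency) and satisfy
  |d'| <= L2 |d| + L1 sqrt(Nmax) B, where B bounds the differences of all neighbours.
  A neighbour outside E is frozen at the common reference point in at least one configuration and
  moves with speed at most M in the other, so its difference is at most M t.
  A first-crossing comparison argument for this coupled system bounds |d| by
  phi(t) = L1 sqrt(Nmax) M (exp(L2 t) - 1 - L2 t) / L2^2, the solution of
  phi' = L2 phi + L1 sqrt(Nmax) M t with phi(0) = 0; by convexity of exp, the choice of t* is
  exactly what makes phi(t) <= M t on [0, t*].
\<close>

lemma has_path_0_iff: "has_path Nb j i 0 \<longleftrightarrow> j = i"
  unfolding has_path_def by auto

lemma has_path_snoc: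
  assumes "has_path Nb j i k" and "i \<in> Nb i'"
  shows "has_path Nb j i' (Suc k)"
proof -
  obtain p where p: "p 0 = j" "p k = i" "\<forall>n<k. p n \<in> Nb (p (Suc n))"
    using assms(1) unfolding has_path_def by blast
  let ?q = "\<lambda>n. if n \<le> k then p n else i'"
  have "\<forall>n<Suc k. ?q n \<in> Nb (?q (Suc n))"
    using p assms(2) by (auto simp: less_Suc_eq)
  then show ?thesis
    unfolding has_path_def using p by (intro exI[of _ ?q]) auto
qed

lemma has_path_Cons:
  assumes "has_path Nb j i k" and "j' \<in> Nb j"
  shows "has_path Nb j' i (Suc k)"
proof -
  obtain p where p: "p 0 = j" "p k = i" "\<forall>n<k. p n \<in> Nb (p (Suc n))"
    using assms(1) unfolding has_path_def by blast
  let ?q = "\<lambda>n. case n of 0 \<Rightarrow> j' | Suc n' \<Rightarrow> p n'"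
  have "\<forall>n<Suc k. ?q n \<in> Nb (?q (Suc n))"
    using p assms(2) by (auto simp: less_Suc_eq_0_disj)
  then show ?thesis
    unfolding has_path_def using p by (intro exI[of _ ?q]) auto
qed

lemma ball_layer_eq:
  "ball_layer N Nb i n = insert i {j \<in> {1..N}. \<exists>k\<le>n. has_path Nb j i k}"
proof (intro set_eqI iffI)
  fix j assume "j \<in> ball_layer N Nb i n"
  then obtain k where "k \<le> n" "j \<in> layer N Nb i k"
    unfolding ball_layer_def by auto
  then show "j \<in> insert i {j \<in> {1..N}. \<exists>k\<le>n. has_path Nb j i k}"
    unfolding layer_def by (auto split: if_splits)
next
  fix j assume j: "j \<in> insert i {j \<in> {1..N}. \<exists>k\<le>n. has_path Nb j i k}"
  show "j \<in> ball_layer N Nb i n"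
  proof (cases "j = i")
    case True
    then show ?thesis unfolding ball_layer_def layer_def by auto
  next
    case False
    with j obtain k where k: "k \<le> n" "has_path Nb j i k" "j \<in> {1..N}" by auto
    define k0 where "k0 = (LEAST k. has_path Nb j i k)"
    have path: "has_path Nb j i k0" and "k0 \<le> k"
      unfolding k0_def using k(2) by (rule LeastI, rule Least_le)
    have shortest: "\<forall>k'<k0. \<not> has_path Nb j i k'"
      unfolding k0_def using not_less_Least by blast
    have "k0 \<noteq> 0"
      using path False by (metis has_path_0_iff)
    then have "j \<in> layer N Nb i k0"
      unfolding layer_def using path shortest False k(3) by auto
    then show ?thesis
      unfolding ball_layer_def using \<open>k0 \<le> k\<close> k(1) by auto
  qed
qed

lemma ball_layer_mono: "a \<le> b \<Longrightarrow> ball_layer N Nb i a \<subseteq> ball_layer N Nb i b"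
  unfolding ball_layer_def by (intro UN_mono) auto

lemma ball_layer_Suc: "ball_layer N Nb i (Suc k) = ball_layer N Nb i k \<union> layer N Nb i (Suc k)"
  unfolding ball_layer_def by (auto simp: atMost_Suc)

lemma ball_layer_subset: "i \<in> {1..N} \<Longrightarrow> ball_layer N Nb i k \<subseteq> {1..N}"
  unfolding ball_layer_eq by auto

lemma neighbour_in_ball_layer_Suc:
  assumes "\<kappa> \<in> ball_layer N Nb i k" and "\<nu> \<in> Nb \<kappa>" and "\<nu> \<in> {1..N}"
  shows "\<nu> \<in> ball_layer N Nb i (Suc k)"
proof -
  obtain k' where k': "k' \<le> k" "has_path Nb \<kappa> i k'"
  proof (cases "\<kappa> = i")
    case True
    then show ?thesis using that[of 0] by (simp add: has_path_0_iff)
  next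
    case False
    then show ?thesis using assms(1) that unfolding ball_layer_eq by auto
  qed
  then have "has_path Nb \<nu> i (Suc k')"
    using has_path_Cons assms(2) by blast
  then show ?thesis
    unfolding ball_layer_eq using assms(3) k'(1) by (auto intro!: exI[of _ "Suc k'"])
qed

lemma ball_layer_subset_neighbour:
  assumes "l \<in> Nb i" and "l \<in> {1..N}"
  shows "ball_layer N Nb l k \<subseteq> ball_layer N Nb i (Suc k)"
proof
  fix j assume "j \<in> ball_layer N Nb l k"
  then obtain k' where "k' \<le> k" "j \<in> {1..N}" "has_path Nb j l k'"
    unfolding ball_layer_eq using assms(2) has_path_0_iff by blast
  then show "j \<in> ball_layer N Nb i (Suc k)"
    unfolding ball_layer_eq using has_path_snoc assms(1) by fastforce
qed

lemma norm_diff_le_of_derivative_bound: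
  fixes x :: "real \<Rightarrow> 'a::real_normed_vector"
  assumes deriv: "\<And>s. 0 \<le> s \<Longrightarrow> (x has_vector_derivative x' s) (at s within {0..})"
    and bound: "\<And>s. 0 \<le> s \<Longrightarrow> norm (x' s) \<le> M"
    and "0 \<le> t"
  shows "norm (x t - x 0) \<le> M * t"
proof (cases "t = 0")
  case False
  then have "0 < t" using \<open>0 \<le> t\<close> by simp
  have "continuous_on {0..} x"
    using deriv by (intro continuous_on_vector_derivative) auto
  then have "norm (x t - x 0) \<le> M * t - M * 0"
  proof (intro differentiable_bound_general[OF \<open>0 < t\<close>] continuous_intros)
    fix s :: real assume s: "0 < s" "s < t"
    have "at s within {0..} = at s"
      by (rule at_within_interior) (use s in simp)
    then show "(x has_vector_derivative x' s) (at s)"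
      using deriv[of s] s by simp
    show "((\<lambda>s. M * s) has_vector_derivative M) (at s)"
      by (auto intro!: derivative_eq_intros)
    show "norm (x' s) \<le> M" using bound s by simp
  qed (auto intro: continuous_on_subset)
  then show ?thesis by simp
qed simp

lemma first_crossing:
  fixes u :: "'i \<Rightarrow> real \<Rightarrow> real" and v :: "real \<Rightarrow> real"
  assumes "finite E" and "continuous_on {a..b} v"
    and "\<And>\<kappa>. \<kappa> \<in> E \<Longrightarrow> continuous_on {a..b} (u \<kappa>)"
    and "\<kappa> \<in> E" "s \<in> {a..b}" "v s \<le> u \<kappa> s"
  obtains \<tau> \<kappa>' where "\<tau> \<in> {a..b}" "\<kappa>' \<in> E" "v \<tau> \<le> u \<kappa>' \<tau>"
    and "\<And>t \<nu>. t \<in> {a..<\<tau>} \<Longrightarrow> \<nu> \<in> E \<Longrightarrow> u \<nu> t < v t"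
proof -
  define A where "A = {t \<in> {a..b}. \<exists>\<kappa>\<in>E. v t \<le> u \<kappa> t}"
  have "A = (\<Union>\<kappa>\<in>E. {t \<in> {a..b}. v t \<le> u \<kappa> t})"
    unfolding A_def by auto
  moreover have "closed {t \<in> {a..b}. v t \<le> u \<kappa> t}" if "\<kappa> \<in> E" for \<kappa>
    using assms(2,3) that by (intro continuous_on_closed_Collect_le) auto
  ultimately have "closed A"
    using \<open>finite E\<close> by auto
  moreover have "A \<noteq> {}" and "bdd_below A"
    using assms(4-6) unfolding A_def by (auto intro: bdd_belowI[of _ a])
  ultimately have "Inf A \<in> A" and "\<And>t. t \<in> A \<Longrightarrow> Inf A \<le> t"
    by (auto intro: closed_contains_Inf cInf_lower)
  then show ?thesis
    using that[of "Inf A"] unfolding A_def by force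
qed

context
  fixes E :: "'i set" and d g :: "'i \<Rightarrow> real \<Rightarrow> 'a::real_normed_vector"
    and \<phi> w :: "real \<Rightarrow> real" and a c T :: real
  assumes finite: "finite E" and a_nonneg: "0 \<le> a"
    and d_deriv: "\<And>\<kappa> t. \<kappa> \<in> E \<Longrightarrow> t \<in> {0..T} \<Longrightarrow>
                 (d \<kappa> has_vector_derivative g \<kappa> t) (at t within {0..T})"
    and d_init: "\<And>\<kappa>. \<kappa> \<in> E \<Longrightarrow> d \<kappa> 0 = 0"
    and growth: "\<And>\<kappa> t B. \<kappa> \<in> E \<Longrightarrow> t \<in> {0..T} \<Longrightarrow> \<forall>\<nu>\<in>E. norm (d \<nu> t) \<le> B \<Longrightarrow> w t \<le> B \<Longrightarrow>
                 norm (g \<kappa> t) \<le> a * norm (d \<kappa> t) + c * B"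
    and \<phi>_cont: "continuous_on {0..T} \<phi>"
    and \<phi>_deriv: "\<And>t. t \<in> {0<..<T} \<Longrightarrow> (\<phi> has_real_derivative a * \<phi> t + c * w t) (at t)"
    and \<phi>_init: "\<phi> 0 = 0"
    and \<phi>_le: "\<And>t. t \<in> {0..T} \<Longrightarrow> \<phi> t \<le> w t"
begin

lemma coupled_comparison_strict:
  assumes "0 < \<epsilon>" and "\<kappa> \<in> E" and "t \<in> {0..T}"
  shows "norm (d \<kappa> t) < \<phi> t + \<epsilon> * exp ((a + c) * t)"
proof (rule ccontr)
  \<comment> \<open>a strict supersolution: psi' = a psi + c (w + eps exp((a + c) t)) and psi(0) = eps > |d(0)|\<close>
  define \<psi> where "\<psi> t = \<phi> t + \<epsilon> * exp ((a + c) * t)" for t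
  have d_cont: "continuous_on {0..T} (d \<nu>)" if "\<nu> \<in> E" for \<nu>
    using d_deriv that by (intro continuous_on_vector_derivative)
  have \<psi>_cont: "continuous_on {0..T} \<psi>"
    unfolding \<psi>_def by (intro continuous_intros \<phi>_cont)
  assume "\<not> norm (d \<kappa> t) < \<phi> t + \<epsilon> * exp ((a + c) * t)"
  then have "\<psi> t \<le> norm (d \<kappa> t)" unfolding \<psi>_def by simp
  then obtain \<tau> \<kappa>' where \<tau>: "\<tau> \<in> {0..T}" and \<kappa>': "\<kappa>' \<in> E" "\<psi> \<tau> \<le> norm (d \<kappa>' \<tau>)"
    and below: "\<And>s \<nu>. s \<in> {0..<\<tau>} \<Longrightarrow> \<nu> \<in> E \<Longrightarrow> norm (d \<nu> s) < \<psi> s"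
    using first_crossing[where u = "\<lambda>\<nu> s. norm (d \<nu> s)", OF finite \<psi>_cont _ assms(2,3)]
      d_cont continuous_on_norm by blast
  have "\<tau> \<noteq> 0"
    using \<kappa>' d_init \<open>0 < \<epsilon>\<close> by (auto simp: \<psi>_def \<phi>_init)
  then have "0 < \<tau>" using \<tau> by simp
  have "norm (d \<kappa>' \<tau> - d \<kappa>' 0) \<le> \<psi> \<tau> - \<psi> 0"
  proof (rule differentiable_bound_general[OF \<open>0 < \<tau>\<close>])
    show "continuous_on {0..\<tau>} (d \<kappa>')" "continuous_on {0..\<tau>} \<psi>"
      using \<tau> by (auto intro: continuous_on_subset[OF d_cont[OF \<kappa>'(1)]] continuous_on_subset[OF \<psi>_cont])
    fix s assume s: "0 < s" "s < \<tau>"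
    have "at s within {0..T} = at s"
      by (rule at_within_interior) (use s \<tau> in auto)
    then show "(d \<kappa>' has_vector_derivative g \<kappa>' s) (at s)"
      using d_deriv[OF \<kappa>'(1), of s] s \<tau> by simp
    show "(\<psi> has_vector_derivative
            (a * \<phi> s + c * w s + \<epsilon> * ((a + c) * exp ((a + c) * s)))) (at s)"
      unfolding \<psi>_def has_real_derivative_iff_has_vector_derivative[symmetric]
      using \<phi>_deriv[of s] s \<tau> by (auto intro!: derivative_eq_intros)
    define B where "B = w s + \<epsilon> * exp ((a + c) * s)"
    have "\<forall>\<nu>\<in>E. norm (d \<nu> s) \<le> B"
      using below[of s] \<phi>_le[of s] s \<tau> by (fastforce simp: \<psi>_def B_def)
    moreover have "w s \<le> B"
      using \<open>0 < \<epsilon>\<close> by (simp add: B_def)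
    ultimately have "norm (g \<kappa>' s) \<le> a * norm (d \<kappa>' s) + c * B"
      using growth[OF \<kappa>'(1)] s \<tau> by simp
    also have "\<dots> \<le> a * \<psi> s + c * B"
      using below[of s \<kappa>'] \<kappa>'(1) s a_nonneg by (intro add_right_mono mult_left_mono) auto
    also have "\<dots> = a * \<phi> s + c * w s + \<epsilon> * ((a + c) * exp ((a + c) * s))"
      by (simp add: \<psi>_def B_def algebra_simps)
    finally show "norm (g \<kappa>' s) \<le> a * \<phi> s + c * w s + \<epsilon> * ((a + c) * exp ((a + c) * s))" .
  qed
  then show False
    using \<kappa>' d_init[OF \<kappa>'(1)] \<open>0 < \<epsilon>\<close> by (simp add: \<psi>_def \<phi>_init)
qed

lemma coupled_comparison:
  assumes "\<kappa> \<in> E" and "t \<in> {0..T}"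
  shows "norm (d \<kappa> t) \<le> \<phi> t"
proof (rule field_le_epsilon)
  fix e :: real assume "0 < e"
  then have "norm (d \<kappa> t) < \<phi> t + e / exp ((a + c) * t) * exp ((a + c) * t)"
    by (intro coupled_comparison_strict assms) simp
  then show "norm (d \<kappa> t) \<le> \<phi> t + e" by simp
qed

end

lemma exp_comparison_has_derivative:
  fixes a c M :: real
  assumes "a \<noteq> 0"
  shows "((\<lambda>t. c * M * (exp (a * t) - 1 - a * t) / a\<^sup>2) has_real_derivative
           a * (c * M * (exp (a * t) - 1 - a * t) / a\<^sup>2) + c * (M * t)) (at t)"
  using assms by (auto intro!: derivative_eq_intros simp: field_simps power2_eq_square)

lemma exp_comparison_le_linear:
  fixes a c T t :: real
  assumes "0 < a" and "0 \<le> c" and "0 < T"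
    and T_root: "exp (a * T) - (a + a\<^sup>2 / c) * T - 1 = 0"
    and "t \<in> {0..T}"
  shows "c * (exp (a * t) - 1 - a * t) / a\<^sup>2 \<le> t"
proof (cases "c = 0")
  case False
  define s where "s = t / T"
  have s: "s \<in> {0..1}" and t_eq: "t = s * T"
    using assms(3,5) by (auto simp: s_def)
  \<comment> \<open>exp lies below its chord on [0, a T], whose slope a + a^2/c is fixed by the choice of T\<close>
  have "exp ((1 - s) *\<^sub>R 0 + s *\<^sub>R (a * T)) \<le> (1 - s) * exp 0 + s * exp (a * T)"
    using s by (intro convex_onD[OF exp_convex]) auto
  also have "exp (a * T) = (a + a\<^sup>2 / c) * T + 1"
    using T_root by simp
  finally have "exp (a * t) - 1 - a * t \<le> a\<^sup>2 / c * t"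
    by (simp add: t_eq algebra_simps)
  then have "c * (exp (a * t) - 1 - a * t) \<le> a\<^sup>2 * t"
    using False \<open>0 \<le> c\<close> by (simp add: field_simps)
  then show ?thesis
    using \<open>0 < a\<close> by (simp add: field_simps)
qed (use assms in simp)

lemma nbr_dist_le:
  assumes "finite (Nb \<kappa>)" and "0 \<le> B" and "\<And>\<nu>. \<nu> \<in> Nb \<kappa> \<Longrightarrow> norm (x \<nu> - y \<nu>) \<le> B"
  shows "nbr_dist Nb \<kappa> x y \<le> sqrt (real (card (Nb \<kappa>))) * B"
proof -
  have "nbr_dist Nb \<kappa> x y \<le> sqrt (\<Sum>\<nu>\<in>Nb \<kappa>. B\<^sup>2)"
    unfolding nbr_dist_def using assms(3) by (intro real_sqrt_le_mono sum_mono power_mono) auto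
  also have "\<dots> = sqrt (real (card (Nb \<kappa>))) * B"
    using \<open>0 \<le> B\<close> by (simp add: real_sqrt_mult)
  finally show ?thesis .
qed

definition ode_domain :: "nat \<Rightarrow> (nat \<Rightarrow> nat set) \<Rightarrow> nat \<Rightarrow> nat \<Rightarrow> nat set" where
  "ode_domain N Nb i m =
     (if layer N Nb i (Suc m) = {} then ball_layer N Nb i m else ball_layer N Nb i (m - 1))"

lemma ode_domain_subset_ball_layer: "ode_domain N Nb i m \<subseteq> ball_layer N Nb i m"
  unfolding ode_domain_def using ball_layer_mono[of "m - 1" m] by auto

lemma ref_traj_initial:
  "ref_traj N Nb f xG m i lc chi \<Longrightarrow> \<kappa> \<in> ode_domain N Nb i m \<Longrightarrow> chi \<kappa> 0 = xG (lc \<kappa>)"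
  unfolding ref_traj_def ode_domain_def Let_def by auto

lemma ref_traj_has_derivative:
  "ref_traj N Nb f xG m i lc chi \<Longrightarrow> \<kappa> \<in> ode_domain N Nb i m \<Longrightarrow> 0 \<le> t \<Longrightarrow>
     (chi \<kappa> has_vector_derivative f \<kappa> (chi \<kappa> t) (\<lambda>\<nu>. chi \<nu> t)) (at t within {0..})"
  unfolding ref_traj_def ode_domain_def Let_def by auto

lemma ref_traj_frozen:
  assumes "ref_traj N Nb f xG m i lc chi" and "1 \<le> m"
    and "\<kappa> \<in> ball_layer N Nb i m" and "\<kappa> \<notin> ode_domain N Nb i m" and "0 \<le> t"
  shows "chi \<kappa> t = xG (lc \<kappa>)"
proof -
  have nonempty: "layer N Nb i (Suc m) \<noteq> {}"
    using assms(3,4) unfolding ode_domain_def by auto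
  moreover have "\<kappa> \<in> layer N Nb i m"
    using assms(3,4) nonempty ball_layer_Suc[of N Nb i "m - 1"] \<open>1 \<le> m\<close>
    unfolding ode_domain_def by auto
  ultimately show ?thesis
    using assms(1,5) unfolding ref_traj_def Let_def by auto
qed

locale agent_network =
  fixes N :: nat and Nb :: "nat \<Rightarrow> nat set"
    and f :: "nat \<Rightarrow> 'v::euclidean_space \<Rightarrow> (nat \<Rightarrow> 'v) \<Rightarrow> 'v"
    and M L1 L2 :: real
  assumes neighbours_subset: "\<And>j. j \<in> {1..N} \<Longrightarrow> Nb j \<subseteq> {1..N} - {j}"
    and drift_bounded: "\<And>j x y. j \<in> {1..N} \<Longrightarrow> norm (f j x y) \<le> M"
    and lipschitz_neighbours: "\<And>j x y z. j \<in> {1..N} \<Longrightarrow>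
          norm (f j x y - f j x z) \<le> L1 * nbr_dist Nb j y z"
    and lipschitz_own: "\<And>j x x' y. j \<in> {1..N} \<Longrightarrow> norm (f j x y - f j x' y) \<le> L2 * norm (x - x')"
    and L1_pos: "0 < L1" and L2_pos: "0 < L2"
begin

lemma drift_diff_le:
  assumes "\<kappa> \<in> {1..N}" and "0 \<le> B" and "\<And>\<nu>. \<nu> \<in> Nb \<kappa> \<Longrightarrow> norm (x \<nu> - y \<nu>) \<le> B"
  shows "norm (f \<kappa> (x \<kappa>) x - f \<kappa> (y \<kappa>) y)
           \<le> L2 * norm (x \<kappa> - y \<kappa>) + L1 * sqrt (real (card (Nb \<kappa>))) * B"
proof -
  have "finite (Nb \<kappa>)"
    using neighbours_subset[OF assms(1)] finite_subset by blast
  have "norm (f \<kappa> (x \<kappa>) x - f \<kappa> (y \<kappa>) y)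
          \<le> norm (f \<kappa> (x \<kappa>) x - f \<kappa> (y \<kappa>) x) + norm (f \<kappa> (y \<kappa>) x - f \<kappa> (y \<kappa>) y)"
    by (rule norm_diff_triangle_ineq[THEN order_trans[rotated]]) simp
  also have "\<dots> \<le> L2 * norm (x \<kappa> - y \<kappa>) + L1 * nbr_dist Nb \<kappa> x y"
    by (intro add_mono lipschitz_own lipschitz_neighbours assms(1))
  also have "\<dots> \<le> L2 * norm (x \<kappa> - y \<kappa>) + L1 * (sqrt (real (card (Nb \<kappa>))) * B)"
    using nbr_dist_le[of Nb \<kappa> B x y] \<open>finite (Nb \<kappa>)\<close> assms(2,3) L1_pos
    by (intro add_left_mono mult_left_mono) auto
  finally show ?thesis by (simp add: mult_ac)
qed

lemma ode_domain_neighbour: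
  assumes "1 \<le> m" and "i \<in> {1..N}" and "\<kappa> \<in> ode_domain N Nb i m" and "\<nu> \<in> Nb \<kappa>"
  shows "\<nu> \<in> ball_layer N Nb i m"
proof -
  have "\<kappa> \<in> {1..N}"
    using assms(2,3) ode_domain_subset_ball_layer ball_layer_subset by blast
  then have "\<nu> \<in> {1..N}"
    using neighbours_subset assms(4) by blast
  show ?thesis
  proof (cases "layer N Nb i (Suc m) = {}")
    case True
    then have "\<nu> \<in> ball_layer N Nb i (Suc m)"
      using assms(3,4) \<open>\<nu> \<in> {1..N}\<close> neighbour_in_ball_layer_Suc unfolding ode_domain_def by auto
    then show ?thesis
      using True ball_layer_Suc by blast
  next
    case False
    then have "\<nu> \<in> ball_layer N Nb i (Suc (m - 1))"
      using assms(3,4) \<open>\<nu> \<in> {1..N}\<close> neighbour_in_ball_layer_Suc unfolding ode_domain_def by auto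
    then show ?thesis
      using \<open>1 \<le> m\<close> by simp
  qed
qed

lemma ref_traj_displacement_le:
  assumes "ref_traj N Nb f xG m i lc chi" and "i \<in> {1..N}"
    and "\<kappa> \<in> ode_domain N Nb i m" and "0 \<le> t"
  shows "norm (chi \<kappa> t - chi \<kappa> 0) \<le> M * t"
proof (rule norm_diff_le_of_derivative_bound[OF _ _ \<open>0 \<le> t\<close>])
  show "(chi \<kappa> has_vector_derivative f \<kappa> (chi \<kappa> s) (\<lambda>\<nu>. chi \<nu> s)) (at s within {0..})"
    if "0 \<le> s" for s
    using ref_traj_has_derivative[OF assms(1,3) that] .
  have "\<kappa> \<in> {1..N}"
    using assms(2,3) ode_domain_subset_ball_layer ball_layer_subset by blast
  then show "norm (f \<kappa> (chi \<kappa> s) (\<lambda>\<nu>. chi \<nu> s)) \<le> M" for s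
    by (rule drift_bounded)
qed

end


locale consistent_configurations = agent_network +
  fixes xG :: "'c \<Rightarrow> 'v::euclidean_space" and m i l :: nat and li ll :: "nat \<Rightarrow> 'c"
    and chii chil :: "nat \<Rightarrow> real \<Rightarrow> 'v"
  assumes m_pos: "1 \<le> m" and i_agent: "i \<in> {1..N}" and l_neighbour: "l \<in> Nb i"
    and consistent: "\<And>\<kappa>. \<kappa> \<in> ball_layer N Nb i m \<inter> ball_layer N Nb l m \<Longrightarrow> li \<kappa> = ll \<kappa>"
    and traj_i: "ref_traj N Nb f xG m i li chii"
    and traj_l: "ref_traj N Nb f xG m l ll chil"
begin

abbreviation common_domain :: "nat set" where
  "common_domain \<equiv> ode_domain N Nb i m \<inter> ode_domain N Nb l m"

lemma l_agent: "l \<in> {1..N}"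
  using neighbours_subset[OF i_agent] l_neighbour by auto

lemma M_nonneg: "0 \<le> M"
  using drift_bounded[OF i_agent] norm_ge_zero order_trans by blast

lemma ball_layer_pred_subset: "ball_layer N Nb l (m - 1) \<subseteq> ball_layer N Nb i m"
  using ball_layer_subset_neighbour[of l Nb i N "m - 1"] l_neighbour l_agent m_pos by simp

lemma common_domain_subset: "common_domain \<subseteq> ball_layer N Nb i m \<inter> ball_layer N Nb l m"
  using ode_domain_subset_ball_layer by blast

lemma common_domain_agents: "common_domain \<subseteq> {1..N}"
  using common_domain_subset ball_layer_subset[OF i_agent] by blast

lemma traj_diff_off_common_domain:
  assumes "\<kappa> \<in> ball_layer N Nb i m" and "\<kappa> \<in> ball_layer N Nb l m"
    and "\<kappa> \<notin> common_domain" and "0 \<le> t"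
  shows "norm (chii \<kappa> t - chil \<kappa> t) \<le> M * t"
proof -
  have same_cell: "li \<kappa> = ll \<kappa>"
    using consistent assms(1,2) by blast
  consider "\<kappa> \<in> ode_domain N Nb i m" "\<kappa> \<notin> ode_domain N Nb l m"
    | "\<kappa> \<notin> ode_domain N Nb i m" "\<kappa> \<in> ode_domain N Nb l m"
    | "\<kappa> \<notin> ode_domain N Nb i m" "\<kappa> \<notin> ode_domain N Nb l m"
    using assms(3) by blast
  then show ?thesis
  proof cases
    case 1
    then have "chil \<kappa> t = chii \<kappa> 0"
      using ref_traj_frozen[OF traj_l m_pos assms(2)] ref_traj_initial[OF traj_i] same_cell assms(4)
      by simp
    then show ?thesis
      using ref_traj_displacement_le[OF traj_i i_agent 1(1) assms(4)] by simp
  next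
    case 2
    then have "chii \<kappa> t = chil \<kappa> 0"
      using ref_traj_frozen[OF traj_i m_pos assms(1)] ref_traj_initial[OF traj_l] same_cell assms(4)
      by simp
    then show ?thesis
      using ref_traj_displacement_le[OF traj_l l_agent 2(2) assms(4)] by (simp add: norm_minus_commute)
  next
    case 3
    then show ?thesis
      using ref_traj_frozen[OF traj_i m_pos assms(1)] ref_traj_frozen[OF traj_l m_pos assms(2)]
        same_cell assms(4) M_nonneg by simp
  qed
qed

lemma traj_drift_diff_le:
  assumes "\<kappa> \<in> common_domain" and "0 \<le> t"
    and common_bound: "\<forall>\<nu>\<in>common_domain. norm (chii \<nu> t - chil \<nu> t) \<le> B" and "M * t \<le> B"
  shows "norm (f \<kappa> (chii \<kappa> t) (\<lambda>\<nu>. chii \<nu> t) - f \<kappa> (chil \<kappa> t) (\<lambda>\<nu>. chil \<nu> t))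
           \<le> L2 * norm (chii \<kappa> t - chil \<kappa> t)
              + L1 * sqrt (real (Max ((\<lambda>j. card (Nb j)) ` {1..N}))) * B"
proof -
  have \<kappa>: "\<kappa> \<in> {1..N}"
    using assms(1) common_domain_subset ball_layer_subset[OF i_agent] by blast
  have "0 \<le> B"
    using \<open>M * t \<le> B\<close> M_nonneg \<open>0 \<le> t\<close> by (meson mult_nonneg_nonneg order_trans)
  have "norm (chii \<nu> t - chil \<nu> t) \<le> B" if "\<nu> \<in> Nb \<kappa>" for \<nu>
  proof (cases "\<nu> \<in> common_domain")
    case False
    moreover have "\<nu> \<in> ball_layer N Nb i m" "\<nu> \<in> ball_layer N Nb l m"
      using ode_domain_neighbour[OF m_pos i_agent _ that] ode_domain_neighbour[OF m_pos l_agent _ that]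
        assms(1) by auto
    ultimately show ?thesis
      using traj_diff_off_common_domain \<open>0 \<le> t\<close> \<open>M * t \<le> B\<close> by (meson order_trans)
  qed (use common_bound in blast)
  then have "norm (f \<kappa> (chii \<kappa> t) (\<lambda>\<nu>. chii \<nu> t) - f \<kappa> (chil \<kappa> t) (\<lambda>\<nu>. chil \<nu> t))
               \<le> L2 * norm (chii \<kappa> t - chil \<kappa> t) + L1 * sqrt (real (card (Nb \<kappa>))) * B"
    by (intro drift_diff_le \<kappa> \<open>0 \<le> B\<close>)
  also have "\<dots> \<le> L2 * norm (chii \<kappa> t - chil \<kappa> t)
                   + L1 * sqrt (real (Max ((\<lambda>j. card (Nb j)) ` {1..N}))) * B"
    using \<kappa> L1_pos \<open>0 \<le> B\<close> by (intro add_left_mono mult_right_mono mult_left_mono) auto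
  finally show ?thesis .
qed


lemma traj_diff_on_common_domain:
  assumes "0 < T"
    and T_root: "exp (L2 * T)
        - (L2 + L2\<^sup>2 / (L1 * sqrt (real (Max ((\<lambda>j. card (Nb j)) ` {1..N}))))) * T - 1 = 0"
    and "\<kappa> \<in> common_domain" and "t \<in> {0..T}"
  shows "norm (chii \<kappa> t - chil \<kappa> t) \<le> M * t"
proof -
  define c where "c = L1 * sqrt (real (Max ((\<lambda>j. card (Nb j)) ` {1..N})))"
  define \<phi> where "\<phi> t = c * M * (exp (L2 * t) - 1 - L2 * t) / L2\<^sup>2" for t
  have \<phi>_le: "\<phi> t \<le> M * t" if "t \<in> {0..T}" for t
  proof -
    have "c * (exp (L2 * t) - 1 - L2 * t) / L2\<^sup>2 \<le> t"
      using L1_pos by (intro exp_comparison_le_linear[OF L2_pos _ \<open>0 < T\<close> T_root[folded c_def] that])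
        (simp add: c_def)
    then have "M * (c * (exp (L2 * t) - 1 - L2 * t) / L2\<^sup>2) \<le> M * t"
      using M_nonneg by (rule mult_left_mono)
    then show ?thesis
      by (simp add: \<phi>_def mult.commute mult.left_commute)
  qed
  have "norm (chii \<kappa> t - chil \<kappa> t) \<le> \<phi> t"
  proof (rule coupled_comparison[where E = common_domain and a = L2 and c = c and w = "\<lambda>t. M * t"
        and d = "\<lambda>\<kappa> t. chii \<kappa> t - chil \<kappa> t" and \<phi> = \<phi> and T = T
        and g = "\<lambda>\<kappa> t. f \<kappa> (chii \<kappa> t) (\<lambda>\<nu>. chii \<nu> t) - f \<kappa> (chil \<kappa> t) (\<lambda>\<nu>. chil \<nu> t)"])
    show "finite common_domain"
      using finite_subset[OF common_domain_agents] by simp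
    show "((\<lambda>t. chii \<kappa> t - chil \<kappa> t) has_vector_derivative
            f \<kappa> (chii \<kappa> t) (\<lambda>\<nu>. chii \<nu> t) - f \<kappa> (chil \<kappa> t) (\<lambda>\<nu>. chil \<nu> t)) (at t within {0..T})"
      if "\<kappa> \<in> common_domain" "t \<in> {0..T}" for \<kappa> t
    proof (rule has_vector_derivative_diff)
      show "(chii \<kappa> has_vector_derivative f \<kappa> (chii \<kappa> t) (\<lambda>\<nu>. chii \<nu> t)) (at t within {0..T})"
        by (rule has_vector_derivative_within_subset[OF ref_traj_has_derivative[OF traj_i]])
          (use that in auto)
      show "(chil \<kappa> has_vector_derivative f \<kappa> (chil \<kappa> t) (\<lambda>\<nu>. chil \<nu> t)) (at t within {0..T})"
        by (rule has_vector_derivative_within_subset[OF ref_traj_has_derivative[OF traj_l]])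
          (use that in auto)
    qed
    show "chii \<kappa> 0 - chil \<kappa> 0 = 0" if "\<kappa> \<in> common_domain" for \<kappa>
      using that ref_traj_initial[OF traj_i] ref_traj_initial[OF traj_l] consistent common_domain_subset
      by (metis IntD1 IntD2 right_minus_eq subsetD)
    show "norm (f \<kappa> (chii \<kappa> t) (\<lambda>\<nu>. chii \<nu> t) - f \<kappa> (chil \<kappa> t) (\<lambda>\<nu>. chil \<nu> t))
            \<le> L2 * norm (chii \<kappa> t - chil \<kappa> t) + c * B"
      if "\<kappa> \<in> common_domain" "t \<in> {0..T}" "\<forall>\<nu>\<in>common_domain. norm (chii \<nu> t - chil \<nu> t) \<le> B"
        "M * t \<le> B" for \<kappa> t B
      using traj_drift_diff_le[OF that(1) _ that(3,4)] that(2) unfolding c_def by simp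
    show "continuous_on {0..T} \<phi>"
      unfolding \<phi>_def using L2_pos by (intro continuous_intros) auto
    show "(\<phi> has_real_derivative L2 * \<phi> t + c * (M * t)) (at t)" for t
      unfolding \<phi>_def using L2_pos by (intro exp_comparison_has_derivative) simp
    show "0 \<le> L2" "\<phi> 0 = 0"
      using L2_pos by (simp_all add: \<phi>_def)
    show "\<phi> t \<le> M * t" if "t \<in> {0..T}" for t
      using \<phi>_le that .
  qed (fact assms(3,4))+
  with \<phi>_le[OF \<open>t \<in> {0..T}\<close>] show ?thesis by simp
qed

end

theorem lemma4:
  fixes N m i l :: nat
    and Nb :: "nat \<Rightarrow> nat set"
    and f :: "nat \<Rightarrow> 'v::euclidean_space \<Rightarrow> (nat \<Rightarrow> 'v) \<Rightarrow> 'v"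
    and M L1 L2 tstar :: real
    and I :: "'c set" and S :: "'c \<Rightarrow> 'v set" and xG :: "'c \<Rightarrow> 'v"
    and li ll :: "nat \<Rightarrow> 'c"
    and chii chil :: "nat \<Rightarrow> real \<Rightarrow> 'v"
  assumes nbrs: "\<And>j. j \<in> {1..N} \<Longrightarrow> Nb j \<subseteq> {1..N} - {j}"
    and M_pos: "M > 0" and L1_pos: "L1 > 0" and L2_pos: "L2 > 0"
    and bound: "\<And>j x y. j \<in> {1..N} \<Longrightarrow> norm (f j x y) \<le> M"
    and lip1: "\<And>j x y z. j \<in> {1..N} \<Longrightarrow>
                 norm (f j x y - f j x z) \<le> L1 * nbr_dist Nb j y z"
    and lip2: "\<And>j x x' y. j \<in> {1..N} \<Longrightarrow>
                 norm (f j x y - f j x' y) \<le> L2 * norm (x - x')"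
    and cells: "cell_decomposition I S"
    and refpt: "\<And>c. c \<in> I \<Longrightarrow> xG c \<in> S c"
    and m_ge: "m \<ge> 1"
    and i_in: "i \<in> {1..N}"
    and l_nbr: "l \<in> Nb i"
    and li_cfg: "\<And>\<kappa>. \<kappa> \<in> ball_layer N Nb i m \<Longrightarrow> li \<kappa> \<in> I"
    and ll_cfg: "\<And>\<kappa>. \<kappa> \<in> ball_layer N Nb l m \<Longrightarrow> ll \<kappa> \<in> I"
    and consistent: "\<And>\<kappa>. \<kappa> \<in> ball_layer N Nb i m \<inter> ball_layer N Nb l m \<Longrightarrow> li \<kappa> = ll \<kappa>"
    and chii_def: "ref_traj N Nb f xG m i li chii"
    and chil_def: "ref_traj N Nb f xG m l ll chil"
    and tstar_pos: "tstar > 0"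
    and tstar_eq: "exp (L2 * tstar)
        - (L2 + L2\<^sup>2 / (L1 * sqrt (real (Max ((\<lambda>j. card (Nb j)) ` {1..N}))))) * tstar - 1 = 0"
  shows "ball_layer N Nb l (m - 1) \<subseteq> ball_layer N Nb i m \<and>
         (\<forall>\<kappa>\<in>ball_layer N Nb l (m - 1). \<forall>t\<in>{0..tstar}.
            norm (chii \<kappa> t - chil \<kappa> t) \<le> M * t)"
proof -
  interpret consistent_configurations N Nb f M L1 L2 xG m i l li ll chii chil
    by unfold_locales (use assms in auto)
  have "norm (chii \<kappa> t - chil \<kappa> t) \<le> M * t"
    if "\<kappa> \<in> ball_layer N Nb l (m - 1)" and "t \<in> {0..tstar}" for \<kappa> t
  proof (cases "\<kappa> \<in> common_domain")
    case True
    then show ?thesis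
      using traj_diff_on_common_domain[OF tstar_pos tstar_eq _ that(2)] by blast
  next
    case False
    moreover have "\<kappa> \<in> ball_layer N Nb i m" "\<kappa> \<in> ball_layer N Nb l m"
      using that(1) ball_layer_pred_subset ball_layer_mono[of "m - 1" m N Nb l] by auto
    ultimately show ?thesis
      using traj_diff_off_common_domain that(2) by simp
  qed
  then show ?thesis
    using ball_layer_pred_subset by blast
qed

end
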